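(* Let $L\subseteq\Sigma^*$ with $L\ne\Sigma^*$, and suppose $L$ is prefix-closed, suffix-closed, factor-closed, or subword-closed. Then: - $(L^-)^+=L^-$; - $L^+$ is closed under the same relation as $L$; - $((L^+)^-)^+=(L^+)^-$. Consequently, every language obtainable from $L$ by finitely many applications of positive closure and complement is one of $L$, $L^-$, $L^+$, $(L^+)^-$.
   Context: $L^-=\Sigma^*\setminus L$ denotes complement, and $L^+=\bigcup_{i\ge1}L^i$ denotes positive closure. A language is prefix-closed (suffix-, factor-, subword-closed) if it contains every prefix (suffix, factor, subword) of each of its words, where subword means scattered subsequence. *)

theory Defs
  imports Main "HOL-Library.Sublist"
begin

text \<open>Languages over the alphabet given by the type 'a; Sigma* is UNIV :: 'a list set.
Complement of L is the HOL set complement - L.\<close>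

definition conc :: "'a list set \<Rightarrow> 'a list set \<Rightarrow> 'a list set" where
  "conc A B = {u @ v | u v. u \<in> A \<and> v \<in> B}"

fun lang_pow :: "'a list set \<Rightarrow> nat \<Rightarrow> 'a list set" where
  "lang_pow L 0 = {[]}"
| "lang_pow L (Suc n) = conc L (lang_pow L n)"

definition plus_cl :: "'a list set \<Rightarrow> 'a list set" where
  "plus_cl L = (\<Union>i\<in>{1..}. lang_pow L i)"

definition prefix_closed :: "'a list set \<Rightarrow> bool" where
  "prefix_closed L \<longleftrightarrow> (\<forall>w\<in>L. \<forall>u. prefix u w \<longrightarrow> u \<in> L)"

definition suffix_closed :: "'a list set \<Rightarrow> bool" where
  "suffix_closed L \<longleftrightarrow> (\<forall>w\<in>L. \<forall>u. suffix u w \<longrightarrow> u \<in> L)"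

definition factor_closed :: "'a list set \<Rightarrow> bool" where
  "factor_closed L \<longleftrightarrow> (\<forall>w\<in>L. \<forall>u. sublist u w \<longrightarrow> u \<in> L)"

definition subword_closed :: "'a list set \<Rightarrow> bool" where
  "subword_closed L \<longleftrightarrow> (\<forall>w\<in>L. \<forall>u. subseq u w \<longrightarrow> u \<in> L)"

inductive_set kc_reach :: "'a list set \<Rightarrow> 'a list set set" for L where
  base: "L \<in> kc_reach L"
| plus: "X \<in> kc_reach L \<Longrightarrow> plus_cl X \<in> kc_reach L"
| compl: "X \<in> kc_reach L \<Longrightarrow> - X \<in> kc_reach L"

end

theory Submission
  imports Defs
begin

(* A word of L^+ is a concatenation of a nonempty list of words of L.
   (1) If L is prefix- or suffix-closed, its complement is closed under
       concatenation (a factorisation u v of a word in L would put u resp. v in L),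
       hence (L^-)^+ = L^-.  Factor- and subword-closed languages are prefix-closed.
   (2) Each of the four relations r (prefix, suffix, factor, subword) "splits over
       append": r u (v w) implies u = u1 u2 with r u1 v and r u2 w.  For every such
       r, closure of L under r passes to L^+, by induction on the factorisation.
   (3) Applying (1) to L^+ gives ((L^+)^-)^+ = (L^+)^-; together with (L^+)^+ = L^+
       and double complement, the set {L, L^-, L^+, (L^+)^-} is closed under both
       operations, which bounds the reachable languages. *)

lemma lang_pow_concat: "lang_pow X n = {concat ws | ws. length ws = n \<and> set ws \<subseteq> X}"
proof (induction n)
  case 0
  then show ?case by auto
next
  case (Suc n)
  show ?case
  proof (intro equalityI subsetI)
    fix w assume "w \<in> lang_pow X (Suc n)"
    then obtain u ws where "w = u @ concat ws" "u \<in> X" "length ws = n" "set ws \<subseteq> X"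
      using Suc.IH by (auto simp: conc_def)
    then show "w \<in> {concat ws | ws. length ws = Suc n \<and> set ws \<subseteq> X}"
      by (intro CollectI exI[of _ "u # ws"]) simp
  next
    fix w assume "w \<in> {concat ws | ws. length ws = Suc n \<and> set ws \<subseteq> X}"
    then obtain ws where "w = concat ws" "length ws = Suc n" "set ws \<subseteq> X" by auto
    then show "w \<in> lang_pow X (Suc n)"
      using Suc.IH by (cases ws) (auto simp: conc_def)
  qed
qed

lemma plus_cl_iff: "w \<in> plus_cl X \<longleftrightarrow> (\<exists>ws. ws \<noteq> [] \<and> set ws \<subseteq> X \<and> w = concat ws)"
  unfolding plus_cl_def lang_pow_concat by (force simp: Suc_le_eq)

lemma subset_plus_cl: "X \<subseteq> plus_cl X"
  by (auto simp: plus_cl_iff intro!: exI[of _ "[_]"])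

lemma plus_cl_append: "u \<in> plus_cl X \<Longrightarrow> v \<in> plus_cl X \<Longrightarrow> u @ v \<in> plus_cl X"
  unfolding plus_cl_iff by (metis Nil_is_append_conv concat_append set_append sup.boundedI)

lemma plus_cl_of_append_closed:
  assumes append_closed: "\<And>u v. u \<in> X \<Longrightarrow> v \<in> X \<Longrightarrow> u @ v \<in> X"
  shows "plus_cl X = X"
proof
  have "concat ws \<in> X" if "ws \<noteq> []" "set ws \<subseteq> X" for ws
    using that by (induction ws rule: list_nonempty_induct) (auto intro: append_closed)
  then show "plus_cl X \<subseteq> X" by (auto simp: plus_cl_iff)
qed (rule subset_plus_cl)

lemma plus_cl_idem: "plus_cl (plus_cl X) = plus_cl X"
  by (rule plus_cl_of_append_closed) (rule plus_cl_append)

lemma factor_closed_imp_prefix_closed: "factor_closed L \<Longrightarrow> prefix_closed L"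
  unfolding factor_closed_def prefix_closed_def by (meson prefix_imp_sublist)

lemma subword_closed_imp_factor_closed: "subword_closed L \<Longrightarrow> factor_closed L"
  unfolding factor_closed_def subword_closed_def by (meson sublist_imp_subseq)

text \<open>If u, v lie outside L and L is prefix- (suffix-)closed, then so does u v,
  since its prefix u (suffix v) does.\<close>
lemma plus_cl_compl:
  assumes "prefix_closed X \<or> suffix_closed X"
  shows "plus_cl (- X) = - X"
proof (rule plus_cl_of_append_closed)
  fix u v assume "u \<in> - X" "v \<in> - X"
  with assms show "u @ v \<in> - X"
    unfolding prefix_closed_def suffix_closed_def by (metis ComplD ComplI prefixI suffixI)
qed

definition closed_under :: "('a list \<Rightarrow> 'a list \<Rightarrow> bool) \<Rightarrow> 'a list set \<Rightarrow> bool" where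
  "closed_under r L \<longleftrightarrow> (\<forall>w\<in>L. \<forall>u. r u w \<longrightarrow> u \<in> L)"

definition splits_over_append :: "('a list \<Rightarrow> 'a list \<Rightarrow> bool) \<Rightarrow> bool" where
  "splits_over_append r \<longleftrightarrow> (\<forall>u v w. r u (v @ w) \<longrightarrow> (\<exists>u1 u2. u = u1 @ u2 \<and> r u1 v \<and> r u2 w))"

text \<open>The general preservation result: split the predecessor along the first
  factor of the factorisation and recurse on the remaining factors.\<close>
lemma closed_under_plus_cl:
  assumes split: "splits_over_append r" and closed: "closed_under r L"
  shows "closed_under r (plus_cl L)"
proof -
  have "u \<in> plus_cl L" if "ws \<noteq> []" "set ws \<subseteq> L" "r u (concat ws)" for ws u
    using that
  proof (induction ws arbitrary: u rule: list_nonempty_induct)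
    case (single a)
    then have "u \<in> L" using closed by (auto simp: closed_under_def)
    then show ?case using subset_plus_cl by blast
  next
    case (cons a ws)
    obtain u1 u2 where u: "u = u1 @ u2" "r u1 a" "r u2 (concat ws)"
      using split cons.prems(2) unfolding splits_over_append_def by (metis concat.simps(2))
    have "u1 \<in> plus_cl L" using u(2) cons.prems(1) closed subset_plus_cl
      by (auto simp: closed_under_def)
    moreover have "u2 \<in> plus_cl L" using cons.IH u(3) cons.prems(1) by simp
    ultimately show ?case using u(1) plus_cl_append by blast
  qed
  then show ?thesis by (auto simp: closed_under_def plus_cl_iff)
qed

lemma prefix_splits: "splits_over_append prefix"
  unfolding splits_over_append_def prefix_append by (metis Nil_prefix append.right_neutral prefix_order.refl)

lemma suffix_splits: "splits_over_append suffix"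
  unfolding splits_over_append_def suffix_append by (metis Nil_suffix append_Nil suffix_order.refl)

lemma sublist_splits: "splits_over_append sublist"
  unfolding splits_over_append_def sublist_append
  by (metis sublist_Nil_left append.right_neutral append_Nil prefix_imp_sublist suffix_imp_sublist)

lemma subseq_splits: "splits_over_append subseq"
  unfolding splits_over_append_def by (blast elim: subseq_appendE)

lemma prefix_closed_plus_cl: "prefix_closed L \<Longrightarrow> prefix_closed (plus_cl L)"
  using closed_under_plus_cl[OF prefix_splits]
  by (simp add: closed_under_def prefix_closed_def)

lemma suffix_closed_plus_cl: "suffix_closed L \<Longrightarrow> suffix_closed (plus_cl L)"
  using closed_under_plus_cl[OF suffix_splits]
  by (simp add: closed_under_def suffix_closed_def)

lemma factor_closed_plus_cl: "factor_closed L \<Longrightarrow> factor_closed (plus_cl L)"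
  using closed_under_plus_cl[OF sublist_splits]
  by (simp add: closed_under_def factor_closed_def)

lemma subword_closed_plus_cl: "subword_closed L \<Longrightarrow> subword_closed (plus_cl L)"
  using closed_under_plus_cl[OF subseq_splits]
  by (simp add: closed_under_def subword_closed_def)

text \<open>Once both complements are fixed by positive closure, the four languages
  L, L^-, L^+, (L^+)^- are closed under both operations.\<close>
lemma kc_reach_subset:
  assumes "plus_cl (- L) = - L" and "plus_cl (- plus_cl L) = - plus_cl L"
  shows "kc_reach L \<subseteq> {L, - L, plus_cl L, - plus_cl L}"
proof
  fix X assume "X \<in> kc_reach L"
  then show "X \<in> {L, - L, plus_cl L, - plus_cl L}"
  proof (induction rule: kc_reach.induct)
    case (plus X)
    then show ?case using assms plus_cl_idem[of L] by auto
  qed auto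
qed

theorem mainTheorem9:
  fixes L :: "'a list set"
  assumes "L \<noteq> UNIV"
    and "prefix_closed L \<or> suffix_closed L \<or> factor_closed L \<or> subword_closed L"
  shows "plus_cl (- L) = - L
     \<and> ((prefix_closed L \<longrightarrow> prefix_closed (plus_cl L))
       \<and> (suffix_closed L \<longrightarrow> suffix_closed (plus_cl L))
       \<and> (factor_closed L \<longrightarrow> factor_closed (plus_cl L))
       \<and> (subword_closed L \<longrightarrow> subword_closed (plus_cl L)))
     \<and> plus_cl (- plus_cl L) = - plus_cl L
     \<and> kc_reach L \<subseteq> {L, - L, plus_cl L, - plus_cl L}"
proof -
  have pre_or_suf: "prefix_closed L \<or> suffix_closed L"
    using assms(2) factor_closed_imp_prefix_closed subword_closed_imp_factor_closed by blast
  have compl_L: "plus_cl (- L) = - L"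
    using plus_cl_compl pre_or_suf by blast
  have "prefix_closed (plus_cl L) \<or> suffix_closed (plus_cl L)"
    using pre_or_suf prefix_closed_plus_cl suffix_closed_plus_cl by blast
  then have compl_plus_L: "plus_cl (- plus_cl L) = - plus_cl L"
    using plus_cl_compl by blast
  show ?thesis
    by (simp add: compl_L compl_plus_L kc_reach_subset prefix_closed_plus_cl
        suffix_closed_plus_cl factor_closed_plus_cl subword_closed_plus_cl)
qed

end
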